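(* Consider a solution as in the setting, defined for $R\in(R_0,\infty)$ (the full areal-coordinate covering of the maximal Cauchy development), and let $R_i\in(R_0,\infty)$. (1) If $\mathcal{E}(R_i)=0$ then $\mathcal{E}(R)=0$ for all $R\in(R_0,\infty)$. (2) If $\mathcal{E}(R_i)\neq 0$ then $\mathcal{E}(R)$ is nonincreasing in $R$ on $(R_0,\infty)$. (3) If $\mathcal{E}(R_i)\neq0$ and $K\neq0$ then $\mathcal{E}(R)$ is strictly decreasing in $R$ on $(R_0,\infty)$.
   Context: Setting. A smooth vacuum $T^2$ symmetric spacetime on $T^3\times I$ in areal coordinates $(\theta,x,y,R)$, $\theta\in S^1=\mathbb{R}/\mathbb{Z}$, with metric $g=e^{2(\nu-U)}(-\alpha\,dR^2+d\theta^2)+e^{2U}[dx+A\,dy+(G+AH)\,d\theta]^2+e^{-2U}R^2(dy+H\,d\theta)^2$, where $\alpha>0,\nu,U,A,G,H$ are smooth functions of $(\theta,R)$ only, periodic in $\theta$. The Killing fields $\partial_x,\partial_y$ are chosen so that the twist $\epsilon_{abcd}X^aY^b\nabla^cX^d$ vanishes ($X=\partial_x,Y=\partial_y$), and $K\ge0$ denotes the constant twist $\epsilon_{abcd}Y^aX^b\nabla^cY^d$. Set $\beta=\nu+\tfrac12\ln\alpha$. The vacuum equations are: $\beta_R=\sqrt{\alpha}Rh-\frac{e^{2\beta}K^2}{4R^3}$, $\beta_\theta=2R\big(U_RU_\theta+\frac{e^{4U}}{4R^2}A_RA_\theta\big)$, $\alpha_R=-\frac{\alpha e^{2\beta}K^2}{R^3}$,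 $U_{RR}-\alpha U_{\theta\theta}=-\frac{U_R}{R}+\frac{\alpha_RU_R}{2\alpha}+\frac{\alpha_\theta U_\theta}{2}+\frac{e^{4U}}{2R^2}(A_R^2-\alpha A_\theta^2)$, $A_{RR}-\alpha A_{\theta\theta}=\frac{A_R}{R}+\frac{\alpha_RA_R}{2\alpha}+\frac{\alpha_\theta A_\theta}{2}-4A_RU_R+4\alpha A_\theta U_\theta$, $G_R=-AH_R$, $H_R=\frac{e^{2\beta}K}{\sqrt{\alpha}R^3}$, with $h=\frac{U_R^2}{\sqrt\alpha}+\sqrt\alpha\,U_\theta^2+\frac{e^{4U}}{4R^2}\Big(\frac{A_R^2}{\sqrt\alpha}+\sqrt\alpha\,A_\theta^2\Big)$ and $\mathcal{E}(R)=\int_{S^1}h\,d\theta$. Solutions are uniquely determined by data at one time $R_i$. The maximal Cauchy development of such data is covered by these coordinates with $R\in(R_0,\infty)$ for some $R_0\ge0$. *)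

theory Defs
  imports "HOL-Analysis.Analysis"
begin

text \<open>Functions of the areal coordinates are modelled as functions of a pair (theta, R),
  theta the (periodic) angle and R the areal time.\<close>

definition dR :: "(real \<times> real \<Rightarrow> real) \<Rightarrow> real \<times> real \<Rightarrow> real" where
  "dR f p = deriv (\<lambda>r. f (fst p, r)) (snd p)"

definition dth :: "(real \<times> real \<Rightarrow> real) \<Rightarrow> real \<times> real \<Rightarrow> real" where
  "dth f p = deriv (\<lambda>t. f (t, snd p)) (fst p)"

text \<open>C^k on a set S (intended S open): all partial derivatives up to order k exist and are continuous.\<close>
fun Ck :: "nat \<Rightarrow> (real \<times> real) set \<Rightarrow> (real \<times> real \<Rightarrow> real) \<Rightarrow> bool" where
  "Ck 0 S f = continuous_on S f"
| "Ck (Suc k) S f =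
     (continuous_on S f \<and>
      (\<forall>p\<in>S. (\<lambda>r. f (fst p, r)) differentiable (at (snd p)) \<and>
              (\<lambda>t. f (t, snd p)) differentiable (at (fst p))) \<and>
      Ck k S (dR f) \<and> Ck k S (dth f))"

definition smooth2 :: "(real \<times> real) set \<Rightarrow> (real \<times> real \<Rightarrow> real) \<Rightarrow> bool" where
  "smooth2 S f \<longleftrightarrow> (\<forall>k. Ck k S f)"

definition hdens :: "(real \<times> real \<Rightarrow> real) \<Rightarrow> (real \<times> real \<Rightarrow> real) \<Rightarrow> (real \<times> real \<Rightarrow> real)
    \<Rightarrow> real \<times> real \<Rightarrow> real" where
  "hdens \<alpha> U A p =
     (dR U p)\<^sup>2 / sqrt (\<alpha> p) + sqrt (\<alpha> p) * (dth U p)\<^sup>2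
     + exp (4 * U p) / (4 * (snd p)\<^sup>2) * ((dR A p)\<^sup>2 / sqrt (\<alpha> p) + sqrt (\<alpha> p) * (dth A p)\<^sup>2)"

definition energy :: "(real \<times> real \<Rightarrow> real) \<Rightarrow> (real \<times> real \<Rightarrow> real) \<Rightarrow> (real \<times> real \<Rightarrow> real)
    \<Rightarrow> real \<Rightarrow> real" where
  "energy \<alpha> U A R = integral {0..1} (\<lambda>\<theta>. hdens \<alpha> U A (\<theta>, R))"

end

theory Submission
  imports Defs
begin

text \<open>Differentiating the energy density h in R and inserting the wave equations for U and A
  (together with the equation for \<alpha>_R) gives h_R = F_\<theta> - P for an explicit flux F and a
  dissipation P with e^(2\<beta>) K^2/(2R^3) h \<le> P \<le> (2/R + e^(2\<beta>) K^2/(2R^3)) h.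
  By periodicity the flux integrates to zero over the circle, so E' = - \<integral>P \<le> 0.
  On a compact R-interval the upper bound gives E' \<ge> - C E, so by Gronwall a zero of E
  propagates backwards in R (and forwards by monotonicity); if K \<noteq> 0 and E > 0, the lower
  bound gives E' < 0.\<close>

lemma smooth2_continuous_on: "smooth2 S f \<Longrightarrow> continuous_on S f"
  unfolding smooth2_def by (metis Ck.simps(1))

lemma smooth2_dR: "smooth2 S f \<Longrightarrow> smooth2 S (dR f)"
  unfolding smooth2_def by (metis Ck.simps(2))

lemma smooth2_dth: "smooth2 S f \<Longrightarrow> smooth2 S (dth f)"
  unfolding smooth2_def by (metis Ck.simps(2))

lemma smooth2_has_real_derivative_R:
  assumes "smooth2 S f" "(\<theta>, R) \<in> S"
  shows "((\<lambda>r. f (\<theta>, r)) has_real_derivative dR f (\<theta>, R)) (at R)"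
proof -
  have "Ck (Suc 0) S f" using assms(1) unfolding smooth2_def by blast
  then have "(\<lambda>r. f (\<theta>, r)) differentiable (at R)" using assms(2) by force
  then show ?thesis unfolding dR_def by (simp add: DERIV_deriv_iff_real_differentiable)
qed

lemma smooth2_has_real_derivative_theta:
  assumes "smooth2 S f" "(\<theta>, R) \<in> S"
  shows "((\<lambda>t. f (t, R)) has_real_derivative dth f (\<theta>, R)) (at \<theta>)"
proof -
  have "Ck (Suc 0) S f" using assms(1) unfolding smooth2_def by blast
  then have "(\<lambda>t. f (t, R)) differentiable (at \<theta>)" using assms(2) by force
  then show ?thesis unfolding dth_def by (simp add: DERIV_deriv_iff_real_differentiable)
qed

lemma continuous_on_slice:
  fixes g :: "real \<times> real \<Rightarrow> real"
  assumes "continuous_on (UNIV \<times> {R0<..}) g" "R0 < R"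
  shows "continuous_on T (\<lambda>\<theta>. g (\<theta>, R))"
proof -
  have "(\<lambda>\<theta>. (\<theta>, R)) ` T \<subseteq> UNIV \<times> {R0<..}" using assms(2) by auto
  then show ?thesis
    by (intro continuous_on_compose2[OF assms(1)] continuous_intros)
qed

lemma integrable_on_slice:
  fixes g :: "real \<times> real \<Rightarrow> real"
  assumes "continuous_on (UNIV \<times> {R0<..}) g" "R0 < R"
  shows "(\<lambda>\<theta>. g (\<theta>, R)) integrable_on {a..b}"
  using continuous_on_slice[OF assms] by (rule integrable_continuous_interval)

lemma has_real_derivative_integral_slice:
  fixes f f' :: "real \<times> real \<Rightarrow> real"
  assumes f': "\<And>\<theta> r. R0 < r \<Longrightarrow> ((\<lambda>r. f (\<theta>, r)) has_real_derivative f' (\<theta>, r)) (at r)"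
    and f: "continuous_on (UNIV \<times> {R0<..}) f" and cont_f': "continuous_on (UNIV \<times> {R0<..}) f'"
    and R: "R0 < R"
  shows "((\<lambda>r. integral {a..b} (\<lambda>\<theta>. f (\<theta>, r))) has_real_derivative integral {a..b} (\<lambda>\<theta>. f' (\<theta>, R))) (at R)"
proof -
  have "((\<lambda>r. integral (cbox a b) (\<lambda>\<theta>. f (\<theta>, r))) has_real_derivative
      integral (cbox a b) (\<lambda>\<theta>. f' (\<theta>, R))) (at R within {R0<..})"
  proof (rule leibniz_rule_field_derivative[where fx = "\<lambda>r \<theta>. f' (\<theta>, r)"])
    show "(\<lambda>\<theta>. f (\<theta>, r)) integrable_on cbox a b" if "r \<in> {R0<..}" for r
      using integrable_on_slice[OF f, of r a b] that by (simp add: cbox_interval)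
    show "continuous_on ({R0<..} \<times> cbox a b) (\<lambda>(r, \<theta>). f' (\<theta>, r))"
    proof -
      have "continuous_on ({R0<..} \<times> cbox a b) (\<lambda>x. (snd x, fst x))"
        by (intro continuous_intros)
      moreover have "(\<lambda>x. (snd x, fst x)) ` ({R0<..} \<times> cbox a b) \<subseteq> UNIV \<times> {R0<..}"
        by auto
      ultimately show ?thesis
        using continuous_on_compose2[OF cont_f'] by (simp add: case_prod_beta)
    qed
    show "((\<lambda>r. f (\<theta>, r)) has_real_derivative f' (\<theta>, r)) (at r within {R0<..})"
      if "r \<in> {R0<..}" for r \<theta>
      using f' that by (simp add: has_field_derivative_at_within)
    show "R \<in> {R0<..}" using R by simp
  qed (rule convex_real_interval)
  then show ?thesis
    using R by (simp add: at_within_open[of R "{R0<..}"] cbox_interval)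
qed

text \<open>Schwarz's theorem: write f(t,r) - f(a,r) as the integral of f_\<theta> from a to t and
  differentiate under the integral sign.\<close>

lemma dth_dR_commute:
  assumes f: "smooth2 (UNIV \<times> {R0<..}) f" and R: "R0 < R"
  shows "dth (dR f) (\<theta>, R) = dR (dth f) (\<theta>, R)"
proof -
  define a where "a = \<theta> - 1"
  have ft: "smooth2 (UNIV \<times> {R0<..}) (dth f)" using f by (rule smooth2_dth)
  have ftc: "f (t, r) - f (a, r) = integral {a..t} (\<lambda>x. dth f (x, r))" if "a \<le> t" "R0 < r" for t r
  proof -
    have "((\<lambda>x. dth f (x, r)) has_integral f (t, r) - f (a, r)) {a..t}"
      using that smooth2_has_real_derivative_theta[OF f]
      by (intro fundamental_theorem_of_calculus)
        (auto simp: has_real_derivative_iff_has_vector_derivative[symmetric] intro: has_field_derivative_at_within)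
    then show ?thesis by (simp add: integral_unique)
  qed
  have dR_diff: "dR f (t, R) - dR f (a, R) = integral {a..t} (\<lambda>x. dR (dth f) (x, R))" if "a \<le> t" for t
  proof (rule DERIV_unique)
    show "((\<lambda>r. f (t, r) - f (a, r)) has_real_derivative dR f (t, R) - dR f (a, R)) (at R)"
      using R by (intro DERIV_diff smooth2_has_real_derivative_R[OF f]) auto
    have "((\<lambda>r. integral {a..t} (\<lambda>x. dth f (x, r))) has_real_derivative
        integral {a..t} (\<lambda>x. dR (dth f) (x, R))) (at R)"
      using R smooth2_has_real_derivative_R[OF ft]
      by (intro has_real_derivative_integral_slice smooth2_continuous_on smooth2_dR) (use ft in auto)
    then show "((\<lambda>r. f (t, r) - f (a, r)) has_real_derivative integral {a..t} (\<lambda>x. dR (dth f) (x, R))) (at R)"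
      using R ftc[OF that] by (elim has_field_derivative_transform_within_open[OF _ open_greaterThan]) auto
  qed
  have "((\<lambda>t. integral {a..t} (\<lambda>x. dR (dth f) (x, R))) has_real_derivative dR (dth f) (\<theta>, R))
      (at \<theta> within {a..\<theta> + 1})"
    using R ft by (intro integral_has_real_derivative continuous_on_slice smooth2_continuous_on smooth2_dR)
      (auto simp: a_def)
  then have "((\<lambda>t. dR f (a, R) + integral {a..t} (\<lambda>x. dR (dth f) (x, R))) has_real_derivative
      dR (dth f) (\<theta>, R)) (at \<theta>)"
    by (subst (asm) at_within_interior) (auto simp: a_def intro: DERIV_const[THEN DERIV_add, simplified])
  then have "((\<lambda>t. dR f (t, R)) has_real_derivative dR (dth f) (\<theta>, R)) (at \<theta>)"
  proof (rule has_field_derivative_transform_within_open[of _ _ _ "{a<..}"])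
    show "dR f (a, R) + integral {a..t} (\<lambda>x. dR (dth f) (x, R)) = dR f (t, R)" if "t \<in> {a<..}" for t
      using dR_diff[of t] that by simp
  qed (auto simp: a_def)
  then show ?thesis unfolding dth_def by (simp add: DERIV_imp_deriv)
qed

lemma periodic_dR:
  assumes f: "smooth2 (UNIV \<times> {R0<..}) f"
    and per: "\<And>\<theta> R. R0 < R \<Longrightarrow> f (\<theta> + 1, R) = f (\<theta>, R)" and R: "R0 < R"
  shows "dR f (\<theta> + 1, R) = dR f (\<theta>, R)"
proof -
  have "((\<lambda>r. f (\<theta> + 1, r)) has_real_derivative dR f (\<theta>, R)) (at R)"
    using R per
    by (intro has_field_derivative_transform_within_open[OF smooth2_has_real_derivative_R[OF f]
          open_greaterThan]) auto
  then show ?thesis unfolding dR_def by (simp add: DERIV_imp_deriv)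
qed

lemma periodic_dth:
  assumes f: "smooth2 (UNIV \<times> {R0<..}) f"
    and per: "\<And>\<theta> R. R0 < R \<Longrightarrow> f (\<theta> + 1, R) = f (\<theta>, R)" and R: "R0 < R"
  shows "dth f (\<theta> + 1, R) = dth f (\<theta>, R)"
proof -
  have "((\<lambda>t. f (t + 1, R)) has_real_derivative dth f (\<theta> + 1, R)) (at \<theta>)"
    using smooth2_has_real_derivative_theta[OF f, of "\<theta> + 1" R] R DERIV_shift[of "\<lambda>t. f (t, R)"]
    by simp
  moreover have "(\<lambda>t. f (t + 1, R)) = (\<lambda>t. f (t, R))" using per R by auto
  ultimately show ?thesis
    using smooth2_has_real_derivative_theta[OF f, of \<theta> R] R by (auto intro: DERIV_unique)
qed

lemma Gronwall_backward:
  fixes E E' :: "real \<Rightarrow> real"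
  assumes "a \<le> b"
    and E': "\<And>x. a \<le> x \<Longrightarrow> x \<le> b \<Longrightarrow> (E has_real_derivative E' x) (at x)"
    and growth: "\<And>x. a < x \<Longrightarrow> x < b \<Longrightarrow> - C * E x \<le> E' x"
    and "E b \<le> 0"
  shows "E a \<le> 0"
proof -
  define g where "g x = E x * exp (C * x)" for x
  have g': "(g has_real_derivative (E' x + C * E x) * exp (C * x)) (at x)" if "a \<le> x" "x \<le> b" for x
    unfolding g_def by (rule derivative_eq_intros E'[OF that] refl | simp add: algebra_simps)+
  have "g a \<le> g b"
  proof (rule DERIV_nonneg_imp_increasing_open[OF \<open>a \<le> b\<close>])
    show "\<exists>y. (g has_real_derivative y) (at x) \<and> 0 \<le> y" if "a < x" "x < b" for x
      using g'[of x] growth[OF that] that by (intro exI[of _ "(E' x + C * E x) * exp (C * x)"]) simp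
    show "continuous_on {a..b} g"
      using g' by (intro continuous_at_imp_continuous_on ballI DERIV_isCont) auto
  qed
  also have "g b \<le> 0"
    using \<open>E b \<le> 0\<close> by (simp add: g_def mult_nonpos_nonneg)
  finally show ?thesis
    by (simp add: g_def mult_le_0_iff)
qed

lemma DERIV_energy_density_shape:
  fixes s c a b d e :: "real \<Rightarrow> real"
  assumes "(s has_real_derivative s') (at R)" "(c has_real_derivative c') (at R)"
    and "(a has_real_derivative a') (at R)" "(b has_real_derivative b') (at R)"
    and "(d has_real_derivative d') (at R)" "(e has_real_derivative e') (at R)"
    and "0 < s R"
  shows "((\<lambda>r. (a r)\<^sup>2 / s r + s r * (b r)\<^sup>2 + c r * ((d r)\<^sup>2 / s r + s r * (e r)\<^sup>2))
     has_real_derivative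
       2 * a R * a' / s R - (a R)\<^sup>2 * s' / (s R)\<^sup>2 + s' * (b R)\<^sup>2 + 2 * s R * b R * b'
       + c' * ((d R)\<^sup>2 / s R + s R * (e R)\<^sup>2)
       + c R * (2 * d R * d' / s R - (d R)\<^sup>2 * s' / (s R)\<^sup>2 + s' * (e R)\<^sup>2 + 2 * s R * e R * e')) (at R)"
  using assms
  by (auto intro!: derivative_eq_intros simp: field_simps power2_eq_square)

text \<open>The identity h_R = F_\<theta> - P at a single point: s stands for sqrt \<alpha>, c for the
  coupling e^(4U)/(4R^2), E for e^(2\<beta>), and Urt, Art for the mixed derivatives, which
  occur both as \<partial>_R \<partial>_\<theta> (in h_R) and as \<partial>_\<theta> \<partial>_R (in F_\<theta>).\<close>

lemma energy_density_identity:
  fixes s R E K u c Ur Ut Ar At Urr Utt Urt Arr Att Art \<alpha>R \<alpha>t :: real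
  assumes "0 < s" "0 < R"
    and c: "c = exp (4 * u) / (4 * R\<^sup>2)"
    and \<alpha>R: "\<alpha>R = - s\<^sup>2 * E * K\<^sup>2 / R ^ 3"
    and U: "Urr - s\<^sup>2 * Utt = - Ur / R + \<alpha>R * Ur / (2 * s\<^sup>2) + \<alpha>t * Ut / 2
          + exp (4 * u) / (2 * R\<^sup>2) * (Ar\<^sup>2 - s\<^sup>2 * At\<^sup>2)"
    and A: "Arr - s\<^sup>2 * Att = Ar / R + \<alpha>R * Ar / (2 * s\<^sup>2) + \<alpha>t * At / 2
          - 4 * Ar * Ur + 4 * s\<^sup>2 * At * Ut"
  shows "2 * Ur * Urr / s - Ur\<^sup>2 * (\<alpha>R / (2 * s)) / s\<^sup>2 + \<alpha>R / (2 * s) * Ut\<^sup>2 + 2 * s * Ut * Urt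
      + c * (4 * Ur - 2 / R) * (Ar\<^sup>2 / s + s * At\<^sup>2)
      + c * (2 * Ar * Arr / s - Ar\<^sup>2 * (\<alpha>R / (2 * s)) / s\<^sup>2 + \<alpha>R / (2 * s) * At\<^sup>2 + 2 * s * At * Art)
    = \<alpha>t / s * (Ut * Ur + c * At * Ar)
      + 2 * s * (Utt * Ur + Ut * Urt + c * (4 * Ut * At * Ar + Att * Ar + At * Art))
      - (2 / R * (Ur\<^sup>2 / s + c * s * At\<^sup>2)
         + E * K\<^sup>2 / (2 * R ^ 3) * (Ur\<^sup>2 / s + s * Ut\<^sup>2 + c * (Ar\<^sup>2 / s + s * At\<^sup>2)))"
proof -
  have Urr: "Urr = s\<^sup>2 * Utt - Ur / R + \<alpha>R * Ur / (2 * s\<^sup>2) + \<alpha>t * Ut / 2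
          + exp (4 * u) / (2 * R\<^sup>2) * (Ar\<^sup>2 - s\<^sup>2 * At\<^sup>2)" using U by simp
  have Arr: "Arr = s\<^sup>2 * Att + Ar / R + \<alpha>R * Ar / (2 * s\<^sup>2) + \<alpha>t * At / 2
          - 4 * Ar * Ur + 4 * s\<^sup>2 * At * Ut" using A by simp
  show ?thesis
    unfolding Urr Arr \<alpha>R c using assms(1,2)
    by (simp add: field_simps power2_eq_square power3_eq_cube)
qed

locale areal_wave_system =
  fixes \<alpha> U A \<beta> :: "real \<times> real \<Rightarrow> real" and K R0 :: real
  assumes R0_nonneg: "0 \<le> R0"
    and smooth_alpha: "smooth2 (UNIV \<times> {R0<..}) \<alpha>"
    and smooth_U: "smooth2 (UNIV \<times> {R0<..}) U"
    and smooth_A: "smooth2 (UNIV \<times> {R0<..}) A"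
    and periodic_alpha: "\<And>\<theta> R. R0 < R \<Longrightarrow> \<alpha> (\<theta> + 1, R) = \<alpha> (\<theta>, R)"
    and periodic_U: "\<And>\<theta> R. R0 < R \<Longrightarrow> U (\<theta> + 1, R) = U (\<theta>, R)"
    and periodic_A: "\<And>\<theta> R. R0 < R \<Longrightarrow> A (\<theta> + 1, R) = A (\<theta>, R)"
    and alpha_pos: "\<And>\<theta> R. R0 < R \<Longrightarrow> 0 < \<alpha> (\<theta>, R)"
    and continuous_beta: "continuous_on (UNIV \<times> {R0<..}) \<beta>"
    and eq_alphaR: "\<And>\<theta> R. R0 < R \<Longrightarrow>
        dR \<alpha> (\<theta>, R) = - \<alpha> (\<theta>, R) * exp (2 * \<beta> (\<theta>, R)) * K\<^sup>2 / R ^ 3"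
    and eq_U: "\<And>\<theta> R. R0 < R \<Longrightarrow>
        dR (dR U) (\<theta>, R) - \<alpha> (\<theta>, R) * dth (dth U) (\<theta>, R) =
          - dR U (\<theta>, R) / R + dR \<alpha> (\<theta>, R) * dR U (\<theta>, R) / (2 * \<alpha> (\<theta>, R))
          + dth \<alpha> (\<theta>, R) * dth U (\<theta>, R) / 2
          + exp (4 * U (\<theta>, R)) / (2 * R\<^sup>2) * ((dR A (\<theta>, R))\<^sup>2 - \<alpha> (\<theta>, R) * (dth A (\<theta>, R))\<^sup>2)"
    and eq_A: "\<And>\<theta> R. R0 < R \<Longrightarrow>
        dR (dR A) (\<theta>, R) - \<alpha> (\<theta>, R) * dth (dth A) (\<theta>, R) =
          dR A (\<theta>, R) / R + dR \<alpha> (\<theta>, R) * dR A (\<theta>, R) / (2 * \<alpha> (\<theta>, R))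
          + dth \<alpha> (\<theta>, R) * dth A (\<theta>, R) / 2
          - 4 * dR A (\<theta>, R) * dR U (\<theta>, R) + 4 * \<alpha> (\<theta>, R) * dth A (\<theta>, R) * dth U (\<theta>, R)"
begin

abbreviation coupling :: "real \<times> real \<Rightarrow> real" where
  "coupling p \<equiv> exp (4 * U p) / (4 * (snd p)\<^sup>2)"

definition energy_flux :: "real \<times> real \<Rightarrow> real" where
  "energy_flux p = 2 * sqrt (\<alpha> p) * (dth U p * dR U p + coupling p * dth A p * dR A p)"

definition energy_flux_dth :: "real \<times> real \<Rightarrow> real" where
  "energy_flux_dth p =
     dth \<alpha> p / sqrt (\<alpha> p) * (dth U p * dR U p + coupling p * dth A p * dR A p)
     + 2 * sqrt (\<alpha> p) * (dth (dth U) p * dR U p + dth U p * dth (dR U) p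
        + coupling p * (4 * dth U p * dth A p * dR A p + dth (dth A) p * dR A p + dth A p * dth (dR A) p))"

definition dissipation :: "real \<times> real \<Rightarrow> real" where
  "dissipation p =
     2 / snd p * ((dR U p)\<^sup>2 / sqrt (\<alpha> p) + coupling p * sqrt (\<alpha> p) * (dth A p)\<^sup>2)
     + exp (2 * \<beta> p) * K\<^sup>2 / (2 * (snd p) ^ 3) * hdens \<alpha> U A p"

lemma R_pos: "R0 < R \<Longrightarrow> 0 < R"
  using R0_nonneg by linarith

lemma smooth_first_derivatives:
  "smooth2 (UNIV \<times> {R0<..}) (dR U)" "smooth2 (UNIV \<times> {R0<..}) (dth U)"
  "smooth2 (UNIV \<times> {R0<..}) (dR A)" "smooth2 (UNIV \<times> {R0<..}) (dth A)"
  using smooth_U smooth_A by (auto intro: smooth2_dR smooth2_dth)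

lemma hdens_has_derivative_R:
  assumes R: "R0 < R"
  shows "((\<lambda>r. hdens \<alpha> U A (\<theta>, r)) has_real_derivative energy_flux_dth (\<theta>, R) - dissipation (\<theta>, R)) (at R)"
proof -
  have at: "(\<theta>, R) \<in> UNIV \<times> {R0<..}" using R by simp
  note \<alpha>_pos = alpha_pos[OF R, of \<theta>] and \<alpha>R = eq_alphaR[OF R, of \<theta>]
  have s: "((\<lambda>r. sqrt (\<alpha> (\<theta>, r))) has_real_derivative dR \<alpha> (\<theta>, R) / (2 * sqrt (\<alpha> (\<theta>, R)))) (at R)"
    using DERIV_chain2[OF DERIV_real_sqrt[OF \<alpha>_pos] smooth2_has_real_derivative_R[OF smooth_alpha at]]
    by (simp add: field_simps)
  have c: "((\<lambda>r. exp (4 * U (\<theta>, r)) / (4 * r\<^sup>2)) has_real_derivative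
      coupling (\<theta>, R) * (4 * dR U (\<theta>, R) - 2 / R)) (at R)"
    using R_pos[OF R] by (auto intro!: derivative_eq_intros smooth2_has_real_derivative_R[OF smooth_U at]
        simp: field_simps power2_eq_square power3_eq_cube)
  have s_pos: "0 < sqrt (\<alpha> (\<theta>, R))" using \<alpha>_pos by simp
  note derivs = smooth2_has_real_derivative_R[OF _ at]
  note chain_rule = DERIV_energy_density_shape[OF s c derivs[OF smooth_first_derivatives(1)]
      derivs[OF smooth_first_derivatives(2)] derivs[OF smooth_first_derivatives(3)]
      derivs[OF smooth_first_derivatives(4)] s_pos]
  show ?thesis
    unfolding hdens_def prod.sel
    apply (rule DERIV_cong[OF chain_rule])
    unfolding energy_flux_dth_def dissipation_def hdens_def prod.sel
      dth_dR_commute[OF smooth_U R] dth_dR_commute[OF smooth_A R]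
    using \<alpha>_pos R_pos[OF R] eq_U[OF R, of \<theta>] eq_A[OF R, of \<theta>] \<alpha>R
    by (intro energy_density_identity[where u = "U (\<theta>, R)"]) auto
qed

lemma energy_flux_has_derivative_theta:
  assumes R: "R0 < R"
  shows "((\<lambda>t. energy_flux (t, R)) has_real_derivative energy_flux_dth (\<theta>, R)) (at \<theta>)"
proof -
  have at: "(\<theta>, R) \<in> UNIV \<times> {R0<..}" using R by simp
  note \<alpha>_pos = alpha_pos[OF R, of \<theta>]
  note derivs = smooth2_has_real_derivative_theta[OF _ at]
  have s: "((\<lambda>t. sqrt (\<alpha> (t, R))) has_real_derivative dth \<alpha> (\<theta>, R) / (2 * sqrt (\<alpha> (\<theta>, R)))) (at \<theta>)"
    using DERIV_chain2[OF DERIV_real_sqrt[OF \<alpha>_pos] derivs[OF smooth_alpha]]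
    by (simp add: field_simps)
  show ?thesis
    unfolding energy_flux_def energy_flux_dth_def prod.sel
    apply (rule DERIV_cong)
     apply (rule s derivs[OF smooth_U] derivs[OF smooth_A] derivs[OF smooth_first_derivatives(1)]
        derivs[OF smooth_first_derivatives(2)] derivs[OF smooth_first_derivatives(3)]
        derivs[OF smooth_first_derivatives(4)] derivative_eq_intros refl
        | simp add: R_pos[OF R, THEN less_imp_neq, symmetric])+
    using \<alpha>_pos R_pos[OF R] by (simp add: field_simps power2_eq_square power4_eq_xxxx)
qed

lemma energy_flux_periodic:
  assumes R: "R0 < R"
  shows "energy_flux (\<theta> + 1, R) = energy_flux (\<theta>, R)"
  unfolding energy_flux_def prod.sel
  using periodic_alpha periodic_U periodic_A R
  by (simp add: periodic_dR[OF smooth_U periodic_U R] periodic_dth[OF smooth_U periodic_U R]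
      periodic_dR[OF smooth_A periodic_A R] periodic_dth[OF smooth_A periodic_A R])

lemma continuous_on_components:
  "continuous_on (UNIV \<times> {R0<..}) \<alpha>" "continuous_on (UNIV \<times> {R0<..}) (dth \<alpha>)"
  "continuous_on (UNIV \<times> {R0<..}) U" "continuous_on (UNIV \<times> {R0<..}) A"
  "continuous_on (UNIV \<times> {R0<..}) (dR U)" "continuous_on (UNIV \<times> {R0<..}) (dth U)"
  "continuous_on (UNIV \<times> {R0<..}) (dR A)" "continuous_on (UNIV \<times> {R0<..}) (dth A)"
  "continuous_on (UNIV \<times> {R0<..}) (dth (dth U))" "continuous_on (UNIV \<times> {R0<..}) (dth (dR U))"
  "continuous_on (UNIV \<times> {R0<..}) (dth (dth A))" "continuous_on (UNIV \<times> {R0<..}) (dth (dR A))"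
  using smooth_alpha smooth_U smooth_A smooth_first_derivatives
  by (auto intro: smooth2_continuous_on smooth2_dth)

lemma nonzero_on_half_plane:
  "\<forall>p\<in>UNIV \<times> {R0<..}. sqrt (\<alpha> p) \<noteq> 0" "\<forall>p\<in>UNIV \<times> {R0<..}. snd p \<noteq> 0"
  using alpha_pos R_pos by (auto simp: less_imp_neq[symmetric])

lemma continuous_on_hdens: "continuous_on (UNIV \<times> {R0<..}) (hdens \<alpha> U A)"
  unfolding hdens_def[abs_def]
  by (intro continuous_intros continuous_on_components) (use nonzero_on_half_plane in auto)

lemma continuous_on_energy_flux_dth: "continuous_on (UNIV \<times> {R0<..}) energy_flux_dth"
  unfolding energy_flux_dth_def[abs_def]
  by (intro continuous_intros continuous_on_components) (use nonzero_on_half_plane in auto)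

lemma continuous_on_dissipation: "continuous_on (UNIV \<times> {R0<..}) dissipation"
  unfolding dissipation_def[abs_def]
  by (intro continuous_intros continuous_on_components continuous_on_hdens continuous_beta)
    (use nonzero_on_half_plane in auto)

lemma integral_energy_flux_dth:
  assumes R: "R0 < R"
  shows "integral {0..1} (\<lambda>\<theta>. energy_flux_dth (\<theta>, R)) = 0"
proof -
  have "((\<lambda>\<theta>. energy_flux_dth (\<theta>, R)) has_integral energy_flux (1, R) - energy_flux (0, R)) {0..1}"
    using energy_flux_has_derivative_theta[OF R]
    by (intro fundamental_theorem_of_calculus)
      (auto simp: has_real_derivative_iff_has_vector_derivative[symmetric] intro: has_field_derivative_at_within)
  then show ?thesis
    using energy_flux_periodic[OF R, of 0] by (simp add: integral_unique)
qed

lemma energy_has_derivative: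
  assumes R: "R0 < R"
  shows "(energy \<alpha> U A has_real_derivative - integral {0..1} (\<lambda>\<theta>. dissipation (\<theta>, R))) (at R)"
proof -
  have "(energy \<alpha> U A has_real_derivative
      integral {0..1} (\<lambda>\<theta>. energy_flux_dth (\<theta>, R) - dissipation (\<theta>, R))) (at R)"
    unfolding energy_def[abs_def] using R hdens_has_derivative_R
    by (intro has_real_derivative_integral_slice[where f' = "\<lambda>p. energy_flux_dth p - dissipation p"]
        continuous_intros)
      (use continuous_on_hdens continuous_on_energy_flux_dth continuous_on_dissipation in auto)
  also have "integral {0..1} (\<lambda>\<theta>. energy_flux_dth (\<theta>, R) - dissipation (\<theta>, R))
      = - integral {0..1} (\<lambda>\<theta>. dissipation (\<theta>, R))"
    using integral_diff[OF integrable_on_slice[OF continuous_on_energy_flux_dth R]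
        integrable_on_slice[OF continuous_on_dissipation R]] integral_energy_flux_dth[OF R]
    by simp
  finally show ?thesis .
qed

lemma dissipation_split:
  assumes R: "R0 < R"
  obtains X where "0 \<le> X" "X \<le> hdens \<alpha> U A (\<theta>, R)"
    and "dissipation (\<theta>, R) =
      2 / R * X + exp (2 * \<beta> (\<theta>, R)) * K\<^sup>2 / (2 * R ^ 3) * hdens \<alpha> U A (\<theta>, R)"
proof
  let ?s = "sqrt (\<alpha> (\<theta>, R))" and ?c = "coupling (\<theta>, R)"
  have "0 < ?s" "0 \<le> ?c" using alpha_pos[OF R] by auto
  then show "0 \<le> (dR U (\<theta>, R))\<^sup>2 / ?s + ?c * ?s * (dth A (\<theta>, R))\<^sup>2"
    and "(dR U (\<theta>, R))\<^sup>2 / ?s + ?c * ?s * (dth A (\<theta>, R))\<^sup>2 \<le> hdens \<alpha> U A (\<theta>, R)"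
    unfolding hdens_def prod.sel by (auto simp: algebra_simps)
qed (simp add: dissipation_def)

lemma hdens_nonneg: "R0 < R \<Longrightarrow> 0 \<le> hdens \<alpha> U A (\<theta>, R)"
  by (metis dissipation_split order.trans)

lemma dissipation_nonneg:
  assumes R: "R0 < R"
  shows "0 \<le> dissipation (\<theta>, R)"
proof (rule dissipation_split[OF R, of \<theta>])
  fix X assume "0 \<le> X" "dissipation (\<theta>, R) =
      2 / R * X + exp (2 * \<beta> (\<theta>, R)) * K\<^sup>2 / (2 * R ^ 3) * hdens \<alpha> U A (\<theta>, R)"
  then show ?thesis
    using R_pos[OF R] hdens_nonneg[OF R] by simp
qed

lemma dissipation_le:
  assumes R1: "R0 < R1" "R1 \<le> R" and M: "exp (2 * \<beta> (\<theta>, R)) \<le> M"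
  shows "dissipation (\<theta>, R) \<le> (2 / R1 + M * K\<^sup>2 / (2 * R1 ^ 3)) * hdens \<alpha> U A (\<theta>, R)"
proof -
  have R: "R0 < R" using R1 by linarith
  obtain X where X: "0 \<le> X" "X \<le> hdens \<alpha> U A (\<theta>, R)" and P: "dissipation (\<theta>, R) =
      2 / R * X + exp (2 * \<beta> (\<theta>, R)) * K\<^sup>2 / (2 * R ^ 3) * hdens \<alpha> U A (\<theta>, R)"
    using dissipation_split[OF R] .
  have h: "0 \<le> hdens \<alpha> U A (\<theta>, R)" using hdens_nonneg[OF R] .
  have "2 / R * X \<le> 2 / R1 * hdens \<alpha> U A (\<theta>, R)"
    using X R_pos[OF R1(1)] R1(2) by (intro mult_mono frac_le) auto
  moreover have "exp (2 * \<beta> (\<theta>, R)) * K\<^sup>2 / (2 * R ^ 3) \<le> M * K\<^sup>2 / (2 * R1 ^ 3)"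
    using M less_le_trans[OF exp_gt_zero M] R_pos[OF R1(1)] R1(2)
    by (intro frac_le mult_right_mono power_mono) auto
  ultimately show ?thesis
    unfolding P using mult_right_mono[OF _ h] by (fastforce simp: algebra_simps)
qed

lemma dissipation_ge:
  assumes R: "R0 < R"
  shows "exp (2 * \<beta> (\<theta>, R)) * K\<^sup>2 / (2 * R ^ 3) * hdens \<alpha> U A (\<theta>, R) \<le> dissipation (\<theta>, R)"
proof (rule dissipation_split[OF R, of \<theta>])
  fix X assume "0 \<le> X" "dissipation (\<theta>, R) =
      2 / R * X + exp (2 * \<beta> (\<theta>, R)) * K\<^sup>2 / (2 * R ^ 3) * hdens \<alpha> U A (\<theta>, R)"
  then show ?thesis
    using R_pos[OF R] by simp
qed

lemma energy_nonneg: "R0 < R \<Longrightarrow> 0 \<le> energy \<alpha> U A R"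
  unfolding energy_def
  by (intro integral_nonneg integrable_on_slice[OF continuous_on_hdens] hdens_nonneg)

lemma integral_dissipation_nonneg: "R0 < R \<Longrightarrow> 0 \<le> integral {0..1} (\<lambda>\<theta>. dissipation (\<theta>, R))"
  by (intro integral_nonneg integrable_on_slice[OF continuous_on_dissipation] dissipation_nonneg)

lemma continuous_on_energy: "R0 < R1 \<Longrightarrow> continuous_on {R1..R2} (energy \<alpha> U A)"
  by (intro continuous_at_imp_continuous_on ballI DERIV_isCont[OF energy_has_derivative]) auto

lemma energy_antimono:
  assumes "R0 < R1" "R1 \<le> R2"
  shows "energy \<alpha> U A R2 \<le> energy \<alpha> U A R1"
proof (rule DERIV_nonpos_imp_decreasing_open[OF assms(2) _ continuous_on_energy[OF assms(1)]])
  fix x assume "R1 < x" "x < R2"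
  then have "R0 < x" using assms by simp
  then show "\<exists>y. (energy \<alpha> U A has_real_derivative y) (at x) \<and> y \<le> 0"
    using energy_has_derivative integral_dissipation_nonneg by force
qed

lemma energy_vanishes_before:
  assumes R: "R0 < R" "R \<le> Rb" and zero: "energy \<alpha> U A Rb = 0"
  shows "energy \<alpha> U A R = 0"
proof -
  have "continuous_on ({0..1} \<times> {R..Rb}) (\<lambda>p. exp (2 * \<beta> p))"
    using R(1) by (intro continuous_intros continuous_on_subset[OF continuous_beta]) auto
  then have "bounded ((\<lambda>p. exp (2 * \<beta> p)) ` ({0..1} \<times> {R..Rb}))"
    by (intro compact_imp_bounded compact_continuous_image compact_Times compact_Icc)
  then obtain M where M: "\<And>p. p \<in> {0..1} \<times> {R..Rb} \<Longrightarrow> exp (2 * \<beta> p) \<le> M"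
    by (auto simp: bounded_real)
  define C where "C = 2 / R + M * K\<^sup>2 / (2 * R ^ 3)"
  have "energy \<alpha> U A R \<le> 0"
  proof (rule Gronwall_backward[OF R(2)])
    show "(energy \<alpha> U A has_real_derivative - integral {0..1} (\<lambda>\<theta>. dissipation (\<theta>, x))) (at x)"
      if "R \<le> x" for x
      using R(1) that by (intro energy_has_derivative) simp
    show "- C * energy \<alpha> U A x \<le> - integral {0..1} (\<lambda>\<theta>. dissipation (\<theta>, x))"
      if x: "R < x" "x < Rb" for x
    proof -
      have x0: "R0 < x" using R x by simp
      have "integral {0..1} (\<lambda>\<theta>. dissipation (\<theta>, x))
          \<le> integral {0..1} (\<lambda>\<theta>. C * hdens \<alpha> U A (\<theta>, x))"
      proof (rule integral_le)
        show "(\<lambda>\<theta>. dissipation (\<theta>, x)) integrable_on {0..1}"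
          by (rule integrable_on_slice[OF continuous_on_dissipation x0])
        show "(\<lambda>\<theta>. C * hdens \<alpha> U A (\<theta>, x)) integrable_on {0..1}"
          by (intro integrable_on_mult_right integrable_on_slice[OF continuous_on_hdens x0])
        show "dissipation (\<theta>, x) \<le> C * hdens \<alpha> U A (\<theta>, x)" if "\<theta> \<in> {0..1}" for \<theta>
          unfolding C_def using R(1) x that by (intro dissipation_le M) auto
      qed
      then show ?thesis
        by (simp add: energy_def)
    qed
  qed (use zero in simp)
  then show ?thesis
    using energy_nonneg[OF R(1)] by linarith
qed

lemma integral_dissipation_pos:
  assumes "K \<noteq> 0" and R: "R0 < R" and pos: "0 < energy \<alpha> U A R"
  shows "0 < integral {0..1} (\<lambda>\<theta>. dissipation (\<theta>, R))"
proof -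
  have "continuous_on {0..1} (\<lambda>\<theta>. exp (2 * \<beta> (\<theta>, R)))"
    using R by (intro continuous_intros continuous_on_slice[OF continuous_beta])
  then obtain \<theta>0 where "\<And>\<theta>. \<theta> \<in> {0..1} \<Longrightarrow> exp (2 * \<beta> (\<theta>0, R)) \<le> exp (2 * \<beta> (\<theta>, R))"
    using continuous_attains_inf[of "{0..1::real}"] by fastforce
  define c where "c = exp (2 * \<beta> (\<theta>0, R)) * K\<^sup>2 / (2 * R ^ 3)"
  have "0 < c * energy \<alpha> U A R"
    unfolding c_def using assms R_pos[OF R] by simp
  also have "c * energy \<alpha> U A R = integral {0..1} (\<lambda>\<theta>. c * hdens \<alpha> U A (\<theta>, R))"
    by (simp add: energy_def)
  also have "\<dots> \<le> integral {0..1} (\<lambda>\<theta>. dissipation (\<theta>, R))"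
  proof (rule integral_le)
    show "(\<lambda>\<theta>. dissipation (\<theta>, R)) integrable_on {0..1}"
      by (rule integrable_on_slice[OF continuous_on_dissipation R])
    show "(\<lambda>\<theta>. c * hdens \<alpha> U A (\<theta>, R)) integrable_on {0..1}"
      by (intro integrable_on_mult_right integrable_on_slice[OF continuous_on_hdens R])
    fix \<theta> :: real assume "\<theta> \<in> {0..1}"
    then have "c \<le> exp (2 * \<beta> (\<theta>, R)) * K\<^sup>2 / (2 * R ^ 3)"
      unfolding c_def using \<open>\<And>\<theta>. \<theta> \<in> {0..1} \<Longrightarrow> _\<close> R_pos[OF R]
      by (intro divide_right_mono mult_right_mono) auto
    then have "c * hdens \<alpha> U A (\<theta>, R)
        \<le> exp (2 * \<beta> (\<theta>, R)) * K\<^sup>2 / (2 * R ^ 3) * hdens \<alpha> U A (\<theta>, R)"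
      by (rule mult_right_mono[OF _ hdens_nonneg[OF R]])
    then show "c * hdens \<alpha> U A (\<theta>, R) \<le> dissipation (\<theta>, R)"
      using dissipation_ge[OF R, of \<theta>] by linarith
  qed
  finally show ?thesis .
qed

lemma energy_strict_antimono:
  assumes "K \<noteq> 0" and pos: "\<And>R. R0 < R \<Longrightarrow> 0 < energy \<alpha> U A R" and R: "R0 < R1" "R1 < R2"
  shows "energy \<alpha> U A R2 < energy \<alpha> U A R1"
proof (rule DERIV_neg_imp_decreasing_open[OF R(2) _ continuous_on_energy[OF R(1)]])
  fix x assume "R1 < x" "x < R2"
  then have x: "R0 < x" using R by simp
  show "\<exists>y. (energy \<alpha> U A has_real_derivative y) (at x) \<and> y < 0"
    using energy_has_derivative[OF x] integral_dissipation_pos[OF \<open>K \<noteq> 0\<close> x pos[OF x]]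
    by (intro exI[of _ "- integral {0..1} (\<lambda>\<theta>. dissipation (\<theta>, x))"]) simp
qed

lemma energy_zero_everywhere:
  assumes Rb: "R0 < Rb" "energy \<alpha> U A Rb = 0" and R: "R0 < R"
  shows "energy \<alpha> U A R = 0"
proof (cases "R \<le> Rb")
  case True
  then show ?thesis using energy_vanishes_before[OF R _ Rb(2)] by simp
next
  case False
  then show ?thesis using energy_antimono[OF Rb(1), of R] Rb(2) energy_nonneg[OF R] by simp
qed

end

theorem lemma1:
  fixes \<alpha> \<nu> U A G H \<beta> :: "real \<times> real \<Rightarrow> real" and K R0 Ri :: real
  assumes R0_nonneg: "R0 \<ge> 0"
    and K_nonneg: "K \<ge> 0"
    and Ri: "R0 < Ri"
    and smooth: "smooth2 (UNIV \<times> {R0<..}) \<alpha>" "smooth2 (UNIV \<times> {R0<..}) \<nu>"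
      "smooth2 (UNIV \<times> {R0<..}) U" "smooth2 (UNIV \<times> {R0<..}) A"
      "smooth2 (UNIV \<times> {R0<..}) G" "smooth2 (UNIV \<times> {R0<..}) H"
    and periodic: "\<And>\<theta> R. R0 < R \<Longrightarrow>
        \<alpha> (\<theta> + 1, R) = \<alpha> (\<theta>, R) \<and> \<nu> (\<theta> + 1, R) = \<nu> (\<theta>, R) \<and>
        U (\<theta> + 1, R) = U (\<theta>, R) \<and> A (\<theta> + 1, R) = A (\<theta>, R) \<and>
        G (\<theta> + 1, R) = G (\<theta>, R) \<and> H (\<theta> + 1, R) = H (\<theta>, R)"
    and alpha_pos: "\<And>\<theta> R. R0 < R \<Longrightarrow> \<alpha> (\<theta>, R) > 0"
    and beta_def: "\<beta> = (\<lambda>p. \<nu> p + ln (\<alpha> p) / 2)"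
    and eq_betaR: "\<And>\<theta> R. R0 < R \<Longrightarrow>
        dR \<beta> (\<theta>, R) = sqrt (\<alpha> (\<theta>, R)) * R * hdens \<alpha> U A (\<theta>, R)
                         - exp (2 * \<beta> (\<theta>, R)) * K\<^sup>2 / (4 * R ^ 3)"
    and eq_betath: "\<And>\<theta> R. R0 < R \<Longrightarrow>
        dth \<beta> (\<theta>, R) = 2 * R * (dR U (\<theta>, R) * dth U (\<theta>, R)
                         + exp (4 * U (\<theta>, R)) / (4 * R\<^sup>2) * dR A (\<theta>, R) * dth A (\<theta>, R))"
    and eq_alphaR: "\<And>\<theta> R. R0 < R \<Longrightarrow>
        dR \<alpha> (\<theta>, R) = - \<alpha> (\<theta>, R) * exp (2 * \<beta> (\<theta>, R)) * K\<^sup>2 / R ^ 3"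
    and eq_U: "\<And>\<theta> R. R0 < R \<Longrightarrow>
        dR (dR U) (\<theta>, R) - \<alpha> (\<theta>, R) * dth (dth U) (\<theta>, R) =
          - dR U (\<theta>, R) / R + dR \<alpha> (\<theta>, R) * dR U (\<theta>, R) / (2 * \<alpha> (\<theta>, R))
          + dth \<alpha> (\<theta>, R) * dth U (\<theta>, R) / 2
          + exp (4 * U (\<theta>, R)) / (2 * R\<^sup>2) * ((dR A (\<theta>, R))\<^sup>2 - \<alpha> (\<theta>, R) * (dth A (\<theta>, R))\<^sup>2)"
    and eq_A: "\<And>\<theta> R. R0 < R \<Longrightarrow>
        dR (dR A) (\<theta>, R) - \<alpha> (\<theta>, R) * dth (dth A) (\<theta>, R) =
          dR A (\<theta>, R) / R + dR \<alpha> (\<theta>, R) * dR A (\<theta>, R) / (2 * \<alpha> (\<theta>, R))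
          + dth \<alpha> (\<theta>, R) * dth A (\<theta>, R) / 2
          - 4 * dR A (\<theta>, R) * dR U (\<theta>, R) + 4 * \<alpha> (\<theta>, R) * dth A (\<theta>, R) * dth U (\<theta>, R)"
    and eq_G: "\<And>\<theta> R. R0 < R \<Longrightarrow> dR G (\<theta>, R) = - A (\<theta>, R) * dR H (\<theta>, R)"
    and eq_H: "\<And>\<theta> R. R0 < R \<Longrightarrow>
        dR H (\<theta>, R) = exp (2 * \<beta> (\<theta>, R)) * K / (sqrt (\<alpha> (\<theta>, R)) * R ^ 3)"
  shows "(energy \<alpha> U A Ri = 0 \<longrightarrow> (\<forall>R. R0 < R \<longrightarrow> energy \<alpha> U A R = 0))
       \<and> (energy \<alpha> U A Ri \<noteq> 0 \<longrightarrow>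
            (\<forall>R1 R2. R0 < R1 \<and> R1 \<le> R2 \<longrightarrow> energy \<alpha> U A R2 \<le> energy \<alpha> U A R1))
       \<and> (energy \<alpha> U A Ri \<noteq> 0 \<and> K \<noteq> 0 \<longrightarrow>
            (\<forall>R1 R2. R0 < R1 \<and> R1 < R2 \<longrightarrow> energy \<alpha> U A R2 < energy \<alpha> U A R1))"
proof -
  have "continuous_on (UNIV \<times> {R0<..}) \<beta>"
    unfolding beta_def using smooth(1,2) alpha_pos
    by (intro continuous_intros smooth2_continuous_on) (auto simp: less_imp_neq[symmetric])
  then interpret areal_wave_system \<alpha> U A \<beta> K R0
    using R0_nonneg smooth(1,3,4) periodic alpha_pos eq_alphaR eq_U eq_A by unfold_locales auto
  have pos: "0 < energy \<alpha> U A R" if "energy \<alpha> U A Ri \<noteq> 0" "R0 < R" for R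
    using energy_zero_everywhere[OF that(2) _ Ri] energy_nonneg[OF that(2)] that(1) by force
  show ?thesis
    using energy_zero_everywhere[OF Ri] energy_antimono energy_strict_antimono pos by blast
qed

end
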